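(* Let $Q\colon \mathbb{R}^n\to\mathbb{R}$ be a quadratic form, and let $\mathbb{R}^n_+=\{(a_1,\dots,a_n)\mid a_i\ge 0 \text{ for all } i\}$ with interior $\mathrm{Int}(\mathbb{R}^n_+)=\{(a_1,\dots,a_n)\mid a_i>0 \text{ for all } i\}$. Assume there exist $a,b\in\mathbb{R}^n_+$ with $Q(a)>0$ and $Q(b)<0$. Then there exists an open set $U\subset \mathrm{Int}(\mathbb{R}^n_+)$ such that $U\cap Q^{-1}(0)$ is a nonempty smooth submanifold of $U$ of codimension $1$. *)

theory Defs
  imports "HOL-Analysis.Analysis"
begin

definition quadratic_form :: "(real^'n \<Rightarrow> real) \<Rightarrow> bool" where
  "quadratic_form Q \<longleftrightarrow> (\<exists>A :: real^'n^'n. \<forall>x. Q x = x \<bullet> (A *v x))"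

definition nonneg_orthant :: "(real^'n) set" where
  "nonneg_orthant = {x. \<forall>i. 0 \<le> x $ i}"

definition pos_orthant :: "(real^'n) set" where
  "pos_orthant = {x. \<forall>i. 0 < x $ i}"

primrec Ck_on :: "nat \<Rightarrow> 'a::real_normed_vector set \<Rightarrow> ('a \<Rightarrow> 'b::real_normed_vector) \<Rightarrow> bool" where
  "Ck_on 0 S f = continuous_on S f"
| "Ck_on (Suc k) S f =
     (f differentiable_on S \<and> (\<forall>v. Ck_on k S (\<lambda>x. frechet_derivative f (at x) v)))"

definition smooth_on :: "'a::real_normed_vector set \<Rightarrow> ('a \<Rightarrow> 'b::real_normed_vector) \<Rightarrow> bool" where
  "smooth_on S f \<longleftrightarrow> (\<forall>k. Ck_on k S f)"

definition diffeo_between :: "('a::real_normed_vector \<Rightarrow> 'b::real_normed_vector) \<Rightarrow> 'a set \<Rightarrow> 'b set \<Rightarrow> bool" where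
  "diffeo_between \<phi> V W \<longleftrightarrow> open V \<and> open W \<and> \<phi> ` V = W \<and> smooth_on V \<phi> \<and>
     (\<exists>\<psi>. \<psi> ` W = V \<and> smooth_on W \<psi> \<and> (\<forall>x\<in>V. \<psi> (\<phi> x) = x) \<and> (\<forall>y\<in>W. \<phi> (\<psi> y) = y))"

definition smooth_submanifold_codim1 :: "(real^'n) set \<Rightarrow> (real^'n) set \<Rightarrow> bool" where
  "smooth_submanifold_codim1 M U \<longleftrightarrow> open U \<and> M \<subseteq> U \<and>
     (\<forall>p\<in>M. \<exists>V W (\<phi> :: real^'n \<Rightarrow> real^'n) i. p \<in> V \<and> V \<subseteq> U \<and> diffeo_between \<phi> V W \<and>
        \<phi> ` (M \<inter> V) = {y \<in> W. y $ i = 0})"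

end

theory Submission
  imports Defs
begin

text \<open>First a zero \<open>p\<close> of \<open>Q\<close> in the open orthant with nonzero gradient is found: the sets
  \<open>Q > 0\<close> and \<open>Q < 0\<close> are open, so \<open>a\<close> and \<open>b\<close> can be moved into the open orthant, and
  \<open>Q\<close> vanishes somewhere on the segment between them. The gradient there is nonzero, for
  otherwise \<open>Q\<close> would restrict to \<open>c (s - t)\<^sup>2\<close> on the line and could not change sign.
  Near a point with \<open>\<partial>\<^sub>i Q > 0\<close>, replacing the \<open>i\<close>-th coordinate by \<open>Q\<close> is a slice
  chart; its inverse comes from the quadratic formula. Chart and inverse are built from the
  coordinates by field operations and square roots, and such functions are smooth because
  this class is closed under taking directional derivatives.\<close>

section \<open>Smoothness of radical functions\<close>

lemma has_derivative_vec_componentwise: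
  fixes f :: "'a::real_normed_vector \<Rightarrow> real^'n"
  assumes "\<And>j. ((\<lambda>x. f x $ j) has_derivative (\<lambda>v. f' v $ j)) (at a)"
  shows "(f has_derivative f') (at a)"
  unfolding has_derivative_componentwise_within[of f f' a UNIV]
  using assms by (auto simp: Basis_vec_def inner_axis)

lemma Ck_on_cong:
  assumes "open S" "Ck_on k S f" "\<And>x. x \<in> S \<Longrightarrow> f x = g x"
  shows "Ck_on k S g"
  using assms(2,3)
proof (induction k arbitrary: f g)
  case 0
  then show ?case using continuous_on_cong by (metis Ck_on.simps(1))
next
  case (Suc k)
  have f: "f differentiable_on S" "\<And>v. Ck_on k S (\<lambda>x. frechet_derivative f (at x) v)"
    using Suc.prems by auto
  have g: "(g has_derivative frechet_derivative f (at x)) (at x)" if "x \<in> S" for x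
  proof -
    have "(f has_derivative frechet_derivative f (at x)) (at x)"
      using f(1) that assms(1) by (metis at_within_open differentiable_on_def frechet_derivative_works)
    then show ?thesis
      using has_derivative_transform_within_open[OF _ assms(1) that] Suc.prems(2) by blast
  qed
  have "g differentiable_on S"
    using g by (meson differentiable_at_withinI differentiable_def differentiable_on_def)
  moreover have "Ck_on k S (\<lambda>x. frechet_derivative g (at x) v)" for v
    by (rule Suc.IH[OF f(2)]) (use frechet_derivative_at[OF g] in simp)
  ultimately show ?case by simp
qed

lemma smooth_on_derivative_closed:
  assumes S: "open S"
    and closed: "\<And>f. P f \<Longrightarrow> \<exists>f'. (\<forall>x\<in>S. (f has_derivative f' x) (at x)) \<and> (\<forall>v. P (\<lambda>x. f' x v))"
    and "P f"
  shows "smooth_on S f"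
  unfolding smooth_on_def
proof
  fix k show "Ck_on k S f" using \<open>P f\<close>
  proof (induction k arbitrary: f)
    case 0
    then obtain f' where "\<forall>x\<in>S. (f has_derivative f' x) (at x)" using closed by blast
    then show ?case
      by (meson Ck_on.simps(1) continuous_at_imp_continuous_on has_derivative_continuous)
  next
    case (Suc k)
    then obtain f' where f': "\<forall>x\<in>S. (f has_derivative f' x) (at x)" "\<forall>v. P (\<lambda>x. f' x v)"
      using closed by blast
    have "f differentiable_on S"
      using f'(1) by (meson differentiable_at_withinI differentiable_def differentiable_on_def)
    moreover have "Ck_on k S (\<lambda>x. frechet_derivative f (at x) v)" for v
      by (rule Ck_on_cong[OF S Suc.IH[OF f'(2)[rule_format]]])
        (use frechet_derivative_at[OF f'(1)[rule_format]] in simp)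
    ultimately show ?case by simp
  qed
qed

inductive radical_fun :: "(real^'n) set \<Rightarrow> (real^'n \<Rightarrow> real) \<Rightarrow> bool" for S where
  radical_const: "radical_fun S (\<lambda>x. c)"
| radical_coord: "radical_fun S (\<lambda>x. x $ j)"
| radical_add: "radical_fun S f \<Longrightarrow> radical_fun S g \<Longrightarrow> radical_fun S (\<lambda>x. f x + g x)"
| radical_mult: "radical_fun S f \<Longrightarrow> radical_fun S g \<Longrightarrow> radical_fun S (\<lambda>x. f x * g x)"
| radical_inverse: "radical_fun S f \<Longrightarrow> (\<forall>x\<in>S. f x \<noteq> 0) \<Longrightarrow> radical_fun S (\<lambda>x. inverse (f x))"
| radical_sqrt: "radical_fun S f \<Longrightarrow> (\<forall>x\<in>S. f x > 0) \<Longrightarrow> radical_fun S (\<lambda>x. sqrt (f x))"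

lemma radical_minus: "radical_fun S f \<Longrightarrow> radical_fun S (\<lambda>x. - f x)"
  using radical_mult[OF radical_const[of S "- 1"]] by simp

definition has_radical_derivative_on :: "(real^'n) set \<Rightarrow> (real^'n \<Rightarrow> real) \<Rightarrow> bool" where
  "has_radical_derivative_on S f \<longleftrightarrow>
     (\<exists>f'. (\<forall>x\<in>S. (f has_derivative f' x) (at x)) \<and> (\<forall>v. radical_fun S (\<lambda>x. f' x v)))"

lemma has_radical_derivative_on_add:
  assumes "has_radical_derivative_on S f" "has_radical_derivative_on S g"
  shows "has_radical_derivative_on S (\<lambda>x. f x + g x)"
proof -
  obtain f' g' where f': "\<forall>x\<in>S. (f has_derivative f' x) (at x)" "\<forall>v. radical_fun S (\<lambda>x. f' x v)"
    and g': "\<forall>x\<in>S. (g has_derivative g' x) (at x)" "\<forall>v. radical_fun S (\<lambda>x. g' x v)"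
    using assms unfolding has_radical_derivative_on_def by blast
  show ?thesis
    unfolding has_radical_derivative_on_def
    by (intro exI[of _ "\<lambda>x v. f' x v + g' x v"] conjI ballI allI radical_add has_derivative_add)
      (use f' g' in blast)+
qed

lemma has_radical_derivative_on_mult:
  assumes "radical_fun S f" "radical_fun S g"
    and "has_radical_derivative_on S f" "has_radical_derivative_on S g"
  shows "has_radical_derivative_on S (\<lambda>x. f x * g x)"
proof -
  obtain f' g' where f': "\<forall>x\<in>S. (f has_derivative f' x) (at x)" "\<forall>v. radical_fun S (\<lambda>x. f' x v)"
    and g': "\<forall>x\<in>S. (g has_derivative g' x) (at x)" "\<forall>v. radical_fun S (\<lambda>x. g' x v)"
    using assms(3,4) unfolding has_radical_derivative_on_def by blast
  have "radical_fun S (\<lambda>x. f x * g' x v + f' x v * g x)" for v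
    by (rule radical_add[OF radical_mult radical_mult]) (use f'(2) g'(2) assms(1,2) in auto)
  with f'(1) g'(1) show ?thesis
    unfolding has_radical_derivative_on_def
    by (intro exI[of _ "\<lambda>x v. f x * g' x v + f' x v * g x"] conjI ballI allI has_derivative_mult)
      blast+
qed

lemma has_radical_derivative_on_inverse:
  assumes "radical_fun S f" "\<forall>x\<in>S. f x \<noteq> 0" "has_radical_derivative_on S f"
  shows "has_radical_derivative_on S (\<lambda>x. inverse (f x))"
proof -
  obtain f' where f': "\<forall>x\<in>S. (f has_derivative f' x) (at x)" "\<forall>v. radical_fun S (\<lambda>x. f' x v)"
    using assms(3) unfolding has_radical_derivative_on_def by blast
  have inv: "radical_fun S (\<lambda>x. inverse (f x))"
    using assms(1,2) by (rule radical_inverse)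
  show ?thesis
    unfolding has_radical_derivative_on_def
  proof (intro exI[of _ "\<lambda>x v. - (inverse (f x) * f' x v * inverse (f x))"] conjI ballI allI)
    fix x assume "x \<in> S"
    show "((\<lambda>x. inverse (f x)) has_derivative (\<lambda>v. - (inverse (f x) * f' x v * inverse (f x)))) (at x)"
      by (rule Deriv.has_derivative_inverse) (use \<open>x \<in> S\<close> f'(1) assms(2) in auto)
  next
    fix v show "radical_fun S (\<lambda>x. - (inverse (f x) * f' x v * inverse (f x)))"
      by (intro radical_minus radical_mult inv) (use f'(2) in blast)
  qed
qed

lemma has_radical_derivative_on_sqrt:
  assumes "radical_fun S f" "\<forall>x\<in>S. f x > 0" "has_radical_derivative_on S f"
  shows "has_radical_derivative_on S (\<lambda>x. sqrt (f x))"
proof -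
  obtain f' where f': "\<forall>x\<in>S. (f has_derivative f' x) (at x)" "\<forall>v. radical_fun S (\<lambda>x. f' x v)"
    using assms(3) unfolding has_radical_derivative_on_def by blast
  have inv_sqrt: "radical_fun S (\<lambda>x. inverse (sqrt (f x)))"
    using assms(1,2) by (intro radical_inverse radical_sqrt) auto
  show ?thesis
    unfolding has_radical_derivative_on_def
  proof (intro exI[of _ "\<lambda>x v. f' x v * (inverse (sqrt (f x)) * (1/2))"] conjI ballI allI)
    fix x assume x: "x \<in> S"
    have "DERIV sqrt (f x) :> inverse (sqrt (f x)) / 2"
      using x assms(2) by (intro DERIV_real_sqrt) auto
    from DERIV_compose_FDERIV[OF this f'(1)[rule_format, OF x]]
    show "((\<lambda>x. sqrt (f x)) has_derivative (\<lambda>v. f' x v * (inverse (sqrt (f x)) * (1/2)))) (at x)"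
      by simp
  next
    fix v show "radical_fun S (\<lambda>x. f' x v * (inverse (sqrt (f x)) * (1/2)))"
      by (intro radical_mult inv_sqrt radical_const) (use f'(2) in blast)
  qed
qed

lemma radical_fun_has_radical_derivative_on:
  "radical_fun S f \<Longrightarrow> has_radical_derivative_on S f"
proof (induction rule: radical_fun.induct)
  case (radical_const c)
  show ?case
    unfolding has_radical_derivative_on_def
    by (intro exI[of _ "\<lambda>x v. 0"] conjI ballI allI has_derivative_const radical_fun.radical_const)
next
  case (radical_coord j)
  show ?case
    unfolding has_radical_derivative_on_def
    by (intro exI[of _ "\<lambda>x v. v $ j"] conjI ballI allI radical_fun.radical_const
        bounded_linear_imp_has_derivative bounded_linear_vec_nth)
qed (simp_all add: has_radical_derivative_on_add has_radical_derivative_on_mult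
    has_radical_derivative_on_inverse has_radical_derivative_on_sqrt)

lemma radical_fun_continuous_on: "radical_fun S f \<Longrightarrow> continuous_on S f"
  using radical_fun_has_radical_derivative_on unfolding has_radical_derivative_on_def
  by (meson continuous_at_imp_continuous_on has_derivative_continuous)

lemma radical_fun_sum:
  "finite K \<Longrightarrow> (\<And>k. k \<in> K \<Longrightarrow> radical_fun S (\<lambda>x. f k x)) \<Longrightarrow> radical_fun S (\<lambda>x. \<Sum>k\<in>K. f k x)"
  by (induction K rule: finite_induct) (auto intro: radical_fun.radical_const radical_fun.radical_add)

lemma radical_fun_bilinear:
  fixes B :: "real^'n^'n"
  assumes "\<And>j. radical_fun S (\<lambda>x. u x $ j)" "\<And>j. radical_fun S (\<lambda>x. w x $ j)"
  shows "radical_fun S (\<lambda>x. u x \<bullet> (B *v w x))"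
proof -
  have "radical_fun S (\<lambda>x. B $ k $ l * w x $ l)" for k l
    by (rule radical_mult[OF radical_const assms(2)])
  then have "radical_fun S (\<lambda>x. u x $ k * (\<Sum>l\<in>UNIV. B $ k $ l * w x $ l))" for k
    by (intro radical_mult[OF assms(1)] radical_fun_sum[OF finite_class.finite_UNIV])
  then have "radical_fun S (\<lambda>x. \<Sum>k\<in>UNIV. u x $ k * (\<Sum>l\<in>UNIV. B $ k $ l * w x $ l))"
    by (intro radical_fun_sum[OF finite_class.finite_UNIV])
  then show ?thesis
    by (simp add: inner_vec_def matrix_vector_mult_def)
qed

lemma smooth_on_radical_components:
  fixes F :: "real^'n \<Rightarrow> real^'m"
  assumes "open S" "\<And>j. radical_fun S (\<lambda>x. F x $ j)"
  shows "smooth_on S F"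
proof (rule smooth_on_derivative_closed[where P="\<lambda>F. \<forall>j. radical_fun S (\<lambda>x. F x $ j)"])
  fix F :: "real^'n \<Rightarrow> real^'m" assume "\<forall>j. radical_fun S (\<lambda>x. F x $ j)"
  then have "\<forall>j. \<exists>f'. (\<forall>x\<in>S. ((\<lambda>x. F x $ j) has_derivative f' x) (at x)) \<and>
      (\<forall>v. radical_fun S (\<lambda>x. f' x v))"
    using radical_fun_has_radical_derivative_on unfolding has_radical_derivative_on_def by blast
  then obtain f' where f': "\<And>j. \<forall>x\<in>S. ((\<lambda>x. F x $ j) has_derivative f' j x) (at x)"
    "\<And>j v. radical_fun S (\<lambda>x. f' j x v)"
    unfolding choice_iff by blast
  show "\<exists>F'. (\<forall>x\<in>S. (F has_derivative F' x) (at x)) \<and> (\<forall>v j. radical_fun S (\<lambda>x. F' x v $ j))"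
    by (intro exI[of _ "\<lambda>x v. \<chi> j. f' j x v"] conjI ballI allI has_derivative_vec_componentwise)
      (simp_all add: f')
qed (use assms in blast)+

section \<open>Quadratic forms on the positive orthant\<close>

definition qf :: "real^'n^'n \<Rightarrow> real^'n \<Rightarrow> real" where
  "qf A x = x \<bullet> (A *v x)"

definition qf_deriv :: "real^'n^'n \<Rightarrow> real^'n \<Rightarrow> real^'n \<Rightarrow> real" where
  "qf_deriv A x d = d \<bullet> (A *v x) + x \<bullet> (A *v d)"

lemma qf_add_scaleR: "qf A (x + s *\<^sub>R d) = qf A x + s * qf_deriv A x d + s^2 * qf A d"
  by (simp add: qf_def qf_deriv_def matrix_vector_right_distrib matrix_vector_mult_scaleR
      inner_add_left inner_add_right power2_eq_square algebra_simps)

lemma qf_deriv_add_scaleR: "qf_deriv A (x + s *\<^sub>R d) d = qf_deriv A x d + 2 * s * qf A d"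
  by (simp add: qf_def qf_deriv_def matrix_vector_right_distrib matrix_vector_mult_scaleR
      inner_add_left inner_add_right algebra_simps)

lemma qf_deriv_eq_inner: "qf_deriv A x d = d \<bullet> (A *v x + x v* A)"
  by (simp add: qf_deriv_def inner_add_right dot_lmul_matrix[symmetric] inner_commute)

lemma qf_uminus: "qf (- A) x = - qf A x"
  and qf_deriv_uminus: "qf_deriv (- A) x d = - qf_deriv A x d"
  by (simp_all add: qf_def qf_deriv_def matrix_vector_mult_def inner_vec_def sum_negf)

lemma radical_fun_qf:
  assumes "\<And>j. radical_fun S (\<lambda>x. u x $ j)"
  shows "radical_fun S (\<lambda>x. qf A (u x))"
  unfolding qf_def by (rule radical_fun_bilinear[OF assms assms])

lemma radical_fun_qf_deriv:
  assumes "\<And>j. radical_fun S (\<lambda>x. u x $ j)" "\<And>j. radical_fun S (\<lambda>x. w x $ j)"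
  shows "radical_fun S (\<lambda>x. qf_deriv A (u x) (w x))"
  unfolding qf_deriv_def by (intro radical_add radical_fun_bilinear assms)

lemma open_radical_fun_pos: "radical_fun UNIV f \<Longrightarrow> open {x. 0 < f x}"
  by (intro open_Collect_less continuous_on_const radical_fun_continuous_on)

lemma radical_fun_qf_self: "radical_fun S (qf A)"
  using radical_fun_qf[of S "\<lambda>x. x"] by (simp add: radical_coord)

lemma open_qf_pos: "open {x. 0 < qf A x}"
  and open_qf_neg: "open {x. qf A x < 0}"
  using open_radical_fun_pos[OF radical_fun_qf_self]
    open_radical_fun_pos[OF radical_minus[OF radical_fun_qf_self]]
  by simp_all

lemma qf_deriv_nonzero_if_sign_change:
  assumes "qf A x = 0" "0 < qf A (x + s *\<^sub>R d)" "qf A (x + t *\<^sub>R d) < 0"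
  shows "qf_deriv A x d \<noteq> 0"
proof
  assume "qf_deriv A x d = 0"
  then have "qf A (x + u *\<^sub>R d) = u^2 * qf A d" for u
    by (simp add: qf_add_scaleR assms(1))
  then have "0 < s^2 * qf A d" "t^2 * qf A d < 0"
    using assms(2,3) by simp_all
  then show False
    by (simp add: zero_less_mult_iff mult_less_0_iff)
qed

lemma exists_axis_qf_deriv_nonzero:
  assumes "qf_deriv A x d \<noteq> 0"
  shows "\<exists>i. qf_deriv A x (axis i 1) \<noteq> 0"
proof (rule ccontr)
  assume "\<nexists>i. qf_deriv A x (axis i 1) \<noteq> 0"
  then have "A *v x + x v* A = 0"
    by (simp add: vec_eq_iff qf_deriv_eq_inner inner_axis')
  then show False
    using assms by (simp add: qf_deriv_eq_inner)
qed

lemma open_pos_orthant: "open (pos_orthant :: (real^'n) set)"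
proof -
  have eq: "pos_orthant = (\<Inter>j. {x::real^'n. 0 < x $ j})"
    by (auto simp: pos_orthant_def)
  show ?thesis
    unfolding eq by (intro open_INT finite_class.finite_UNIV ballI open_radical_fun_pos radical_coord)
qed

lemma convex_pos_orthant: "convex pos_orthant"
  unfolding convex_def pos_orthant_def
  by (auto simp: add_pos_nonneg add_nonneg_pos mult_pos_pos order_le_less)

lemma nonneg_orthant_subset_closure: "nonneg_orthant \<subseteq> closure pos_orthant"
proof
  fix a :: "real^'n" assume a: "a \<in> nonneg_orthant"
  define f where "f n = a + inverse (real (Suc n)) *\<^sub>R (\<chi> j. 1)" for n
  have "f n \<in> pos_orthant" for n
    using a by (simp add: f_def nonneg_orthant_def pos_orthant_def add_nonneg_pos)
  moreover have "f \<longlonglongrightarrow> a + 0 *\<^sub>R (\<chi> j. 1)"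
    unfolding f_def by (intro tendsto_intros LIMSEQ_inverse_real_of_nat)
  ultimately show "a \<in> closure pos_orthant"
    unfolding closure_sequential by auto
qed

lemma pos_orthant_meets_open:
  assumes "open S" "S \<inter> nonneg_orthant \<noteq> {}"
  shows "\<exists>x\<in>pos_orthant. x \<in> S"
  using assms nonneg_orthant_subset_closure open_Int_closure_eq_empty by blast

lemma exists_regular_qf_zero_in_pos_orthant:
  assumes "a \<in> nonneg_orthant" "b \<in> nonneg_orthant" "0 < qf A a" "qf A b < 0"
  shows "\<exists>p\<in>pos_orthant. qf A p = 0 \<and> (\<exists>i. qf_deriv A p (axis i 1) \<noteq> 0)"
proof -
  obtain a' where a': "a' \<in> pos_orthant" "0 < qf A a'"
    using pos_orthant_meets_open[OF open_qf_pos, of A] assms(1,3) by blast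
  obtain b' where b': "b' \<in> pos_orthant" "qf A b' < 0"
    using pos_orthant_meets_open[OF open_qf_neg, of A] assms(2,4) by blast
  define d where "d = b' - a'"
  have "\<exists>t\<ge>0. t \<le> 1 \<and> qf A (a' + t *\<^sub>R d) = 0"
  proof (rule IVT2)
    show "\<forall>t. 0 \<le> t \<and> t \<le> 1 \<longrightarrow> isCont (\<lambda>t. qf A (a' + t *\<^sub>R d)) t"
      unfolding qf_add_scaleR by (intro allI impI continuous_intros)
  qed (use a' b' in \<open>simp_all add: d_def\<close>)
  then obtain t where t: "0 \<le> t" "t \<le> 1" and zero: "qf A (a' + t *\<^sub>R d) = 0"
    by blast
  define p where "p = a' + t *\<^sub>R d"
  have "p = (1 - t) *\<^sub>R a' + t *\<^sub>R b'"
    by (simp add: p_def d_def algebra_simps)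
  then have "p \<in> pos_orthant"
    using convexD[OF convex_pos_orthant a'(1) b'(1)] t by simp
  moreover have "qf_deriv A p d \<noteq> 0"
  proof (rule qf_deriv_nonzero_if_sign_change)
    show "0 < qf A (p + (- t) *\<^sub>R d)" "qf A (p + (1 - t) *\<^sub>R d) < 0"
      using a'(2) b'(2) by (simp_all add: p_def d_def algebra_simps)
  qed (use zero p_def in simp)
  ultimately show ?thesis
    using zero exists_axis_qf_deriv_nonzero unfolding p_def by blast
qed

section \<open>Slice charts for the zero set\<close>

lemma rationalized_quadratic_root:
  fixes L a c :: real
  assumes "0 < L" "0 \<le> L^2 + 4*a*c"
  defines "t \<equiv> 2*c / (L + sqrt (L^2 + 4*a*c))"
  shows "t*L + t^2*a = c"
proof -
  define s where "s = sqrt (L^2 + 4*a*c)"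
  have s2: "s^2 = L^2 + 4*a*c" and "0 \<le> s"
    using assms(2) by (simp_all add: s_def)
  then have pos: "0 < L + s"
    using assms(1) by linarith
  have t: "t * (L + s) = 2*c"
    using pos by (simp add: t_def s_def)
  have "(t*L + t^2*a - c) * (L + s)^2 = (t*(L+s))*L*(L+s) + (t*(L+s))^2*a - c*(L+s)^2"
    by (simp add: power2_eq_square algebra_simps)
  also have "\<dots> = c * (L^2 + 4*a*c - s^2)"
    unfolding t by (simp add: power2_eq_square algebra_simps)
  finally show ?thesis
    using pos s2 by simp
qed

lemma rationalized_quadratic_root_eq:
  fixes L a t :: real
  assumes "0 < L" "0 < L + 2*t*a"
  shows "2*(t*L + t^2*a) / (L + sqrt (L^2 + 4*a*(t*L + t^2*a))) = t"
proof -
  have "L^2 + 4*a*(t*L + t^2*a) = (L + 2*t*a)^2"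
    by (simp add: power2_eq_square algebra_simps)
  then have "sqrt (L^2 + 4*a*(t*L + t^2*a)) = L + 2*t*a"
    using assms(2) by simp
  then show ?thesis
    using assms by (simp add: field_simps power2_eq_square)
qed

text \<open>Writing \<open>x = base x + s e\<^sub>i\<close>, where \<open>base x\<close> has \<open>i\<close>-th coordinate \<open>r\<close>, the
  equation \<open>qf A x = y $ i\<close> is quadratic in \<open>s\<close>. Its root \<open>height y\<close> is written in
  rationalized form, which stays valid when \<open>qf A e\<^sub>i = 0\<close>; the sign conditions in
  \<open>chart_dom\<close> single out this root.\<close>
locale qf_slice_chart =
  fixes A :: "real^'n^'n" and i :: 'n and r :: real and U :: "(real^'n) set"
  assumes open_U: "open U"
begin

definition slope :: "real^'n \<Rightarrow> real" where
  "slope x = qf_deriv A x (axis i 1)"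

definition base :: "real^'n \<Rightarrow> real^'n" where
  "base y = (\<chi> j. if j = i then r else y $ j)"

definition chart :: "real^'n \<Rightarrow> real^'n" where
  "chart x = (\<chi> j. if j = i then qf A x else x $ j)"

definition gap :: "real^'n \<Rightarrow> real" where
  "gap y = y $ i - qf A (base y)"

definition discr :: "real^'n \<Rightarrow> real" where
  "discr y = (slope (base y))^2 + 4 * qf A (axis i 1) * gap y"

definition height :: "real^'n \<Rightarrow> real" where
  "height y = 2 * gap y / (slope (base y) + sqrt (discr y))"

definition chart_inv :: "real^'n \<Rightarrow> real^'n" where
  "chart_inv y = (\<chi> j. if j = i then r + height y else y $ j)"

definition chart_dom :: "(real^'n) set" where
  "chart_dom = {x \<in> U. 0 < slope x \<and> 0 < slope (base x)}"

definition inv_dom :: "(real^'n) set" where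
  "inv_dom = {y. 0 < slope (base y) \<and> 0 < discr y}"

definition chart_range :: "(real^'n) set" where
  "chart_range = inv_dom \<inter> chart_inv -` chart_dom"

lemma base_chart [simp]: "base (chart x) = base x"
  by (simp add: vec_eq_iff base_def chart_def)

lemma chart_nth_self [simp]: "chart x $ i = qf A x"
  by (simp add: chart_def)

lemma base_plus_axis: "x = base x + (x $ i - r) *\<^sub>R axis i 1"
  and chart_inv_eq: "chart_inv y = base y + height y *\<^sub>R axis i 1"
  by (simp_all add: vec_eq_iff base_def chart_inv_def axis_def)

lemma qf_chart_inv:
  assumes "y \<in> inv_dom"
  shows "qf A (chart_inv y) = y $ i"
proof -
  have "height y * slope (base y) + (height y)^2 * qf A (axis i 1) = gap y"
    using assms rationalized_quadratic_root[of "slope (base y)" "qf A (axis i 1)" "gap y"]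
    by (simp add: inv_dom_def height_def discr_def)
  then show ?thesis
    unfolding chart_inv_eq qf_add_scaleR by (simp add: gap_def slope_def algebra_simps)
qed

lemma chart_chart_inv: "y \<in> inv_dom \<Longrightarrow> chart (chart_inv y) = y"
  using qf_chart_inv by (simp add: vec_eq_iff chart_def chart_inv_def)

lemma
  assumes "x \<in> chart_dom"
  shows chart_in_inv_dom: "chart x \<in> inv_dom"
    and chart_inv_chart: "chart_inv (chart x) = x"
proof -
  define s where "s = x $ i - r"
  define L where "L = slope (base x)"
  have L: "0 < L" and slope_x: "0 < L + 2 * s * qf A (axis i 1)"
    using assms qf_deriv_add_scaleR[of A "base x" s "axis i 1"] base_plus_axis[of x]
    by (simp_all add: chart_dom_def L_def s_def slope_def)
  have gap: "gap (chart x) = s * L + s^2 * qf A (axis i 1)"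
    using qf_add_scaleR[of A "base x" s "axis i 1"] base_plus_axis[of x]
    by (simp add: gap_def L_def s_def slope_def)
  have "discr (chart x) = (L + 2 * s * qf A (axis i 1))^2"
    by (simp add: discr_def gap L_def power2_eq_square algebra_simps)
  then show "chart x \<in> inv_dom"
    using L slope_x by (simp add: inv_dom_def L_def)
  have "height (chart x) = s"
    using rationalized_quadratic_root_eq[OF L slope_x]
    by (simp add: height_def discr_def gap L_def)
  then show "chart_inv (chart x) = x"
    using base_plus_axis[of x] by (simp add: chart_inv_eq s_def)
qed

lemma radical_fun_base: "radical_fun S (\<lambda>y. base y $ j)"
  by (cases "j = i") (simp_all add: base_def radical_const radical_coord)

lemma radical_fun_chart: "radical_fun S (\<lambda>x. chart x $ j)"
  by (cases "j = i") (simp_all add: chart_def radical_fun_qf_self radical_coord)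

lemma radical_fun_slope: "radical_fun S slope"
  unfolding slope_def[abs_def]
  by (rule radical_fun_qf_deriv[where u="\<lambda>x. x"]) (simp_all add: radical_coord radical_const)

lemma radical_fun_slope_base: "radical_fun S (\<lambda>y. slope (base y))"
  unfolding slope_def by (intro radical_fun_qf_deriv radical_fun_base radical_const)

lemma radical_fun_gap: "radical_fun S gap"
proof -
  have "radical_fun S (\<lambda>y. y $ i + - qf A (base y))"
    by (intro radical_add radical_coord radical_minus radical_fun_qf radical_fun_base)
  moreover have "gap = (\<lambda>y. y $ i + - qf A (base y))"
    by (simp add: fun_eq_iff gap_def)
  ultimately show ?thesis
    by simp
qed

lemma radical_fun_discr: "radical_fun S discr"
proof -
  have "radical_fun S (\<lambda>y. slope (base y) * slope (base y) + 4 * qf A (axis i 1) * gap y)"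
    by (intro radical_add radical_mult radical_fun_slope_base radical_const radical_fun_gap)
  moreover have "discr = (\<lambda>y. slope (base y) * slope (base y) + 4 * qf A (axis i 1) * gap y)"
    by (simp add: fun_eq_iff discr_def power2_eq_square)
  ultimately show ?thesis
    by simp
qed

lemma radical_fun_chart_inv:
  assumes "S \<subseteq> inv_dom"
  shows "radical_fun S (\<lambda>y. chart_inv y $ j)"
proof -
  have discr_pos: "\<forall>y\<in>S. 0 < discr y" and slope_pos: "\<forall>y\<in>S. 0 < slope (base y)"
    using assms by (auto simp: inv_dom_def)
  have "radical_fun S (\<lambda>y. 2 * gap y * inverse (slope (base y) + sqrt (discr y)))"
  proof (intro radical_mult radical_inverse radical_add radical_sqrt radical_const
      radical_fun_slope_base radical_fun_discr radical_fun_gap discr_pos ballI)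
    show "slope (base y) + sqrt (discr y) \<noteq> 0" if "y \<in> S" for y
      using that discr_pos slope_pos by (smt (verit) real_sqrt_ge_zero)
  qed
  then have "radical_fun S height"
    by (simp add: height_def[abs_def] divide_inverse)
  then show ?thesis
    by (cases "j = i") (simp_all add: chart_inv_def radical_add radical_const radical_coord)
qed

lemma open_chart_dom: "open chart_dom"
proof -
  have "chart_dom = U \<inter> {x. 0 < slope x} \<inter> {x. 0 < slope (base x)}"
    by (auto simp: chart_dom_def)
  then show ?thesis
    by (simp only:) (intro open_Int open_U open_radical_fun_pos radical_fun_slope radical_fun_slope_base)
qed

lemma open_inv_dom: "open inv_dom"
proof -
  have "inv_dom = {y. 0 < slope (base y)} \<inter> {y. 0 < discr y}"
    by (auto simp: inv_dom_def)
  then show ?thesis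
    by (simp only:) (intro open_Int open_radical_fun_pos radical_fun_slope_base radical_fun_discr)
qed

lemma smooth_on_chart: "smooth_on chart_dom chart"
  by (intro smooth_on_radical_components open_chart_dom radical_fun_chart)

lemma open_chart_range: "open chart_range"
proof -
  have "continuous_on inv_dom (\<lambda>y. \<chi> j. chart_inv y $ j)"
    by (intro continuous_on_vec_lambda radical_fun_continuous_on radical_fun_chart_inv order_refl)
  then show ?thesis
    unfolding chart_range_def vec_lambda_eta
    by (rule continuous_open_preimage[OF _ open_inv_dom open_chart_dom])
qed

lemma chart_image: "chart ` chart_dom = chart_range"
proof
  show "chart ` chart_dom \<subseteq> chart_range"
    using chart_in_inv_dom chart_inv_chart by (auto simp: chart_range_def)
  show "chart_range \<subseteq> chart ` chart_dom"
    using chart_chart_inv by (force simp: chart_range_def)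
qed

lemma chart_inv_image: "chart_inv ` chart_range = chart_dom"
proof
  show "chart_inv ` chart_range \<subseteq> chart_dom"
    by (auto simp: chart_range_def)
  show "chart_dom \<subseteq> chart_inv ` chart_range"
    using chart_in_inv_dom chart_inv_chart by (force simp: chart_range_def)
qed

lemma diffeo_between_chart: "diffeo_between chart chart_dom chart_range"
  unfolding diffeo_between_def
proof (intro conjI exI[of _ chart_inv] ballI)
  show "smooth_on chart_range chart_inv"
    by (intro smooth_on_radical_components open_chart_range radical_fun_chart_inv)
      (auto simp: chart_range_def)
  show "chart (chart_inv y) = y" if "y \<in> chart_range" for y
    using that chart_chart_inv by (simp add: chart_range_def)
qed (simp_all add: open_chart_dom open_chart_range chart_image chart_inv_image smooth_on_chart
    chart_inv_chart)

lemma chart_image_zero_set: "chart ` (chart_dom \<inter> qf A -` {0}) = {y \<in> chart_range. y $ i = 0}"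
proof
  show "chart ` (chart_dom \<inter> qf A -` {0}) \<subseteq> {y \<in> chart_range. y $ i = 0}"
    using chart_image by auto
  show "{y \<in> chart_range. y $ i = 0} \<subseteq> chart ` (chart_dom \<inter> qf A -` {0})"
  proof safe
    fix y assume "y \<in> chart_range" "y $ i = 0"
    then have "y = chart (chart_inv y)" "chart_inv y \<in> chart_dom" "qf A (chart_inv y) = 0"
      using chart_chart_inv qf_chart_inv by (auto simp: chart_range_def)
    then show "y \<in> chart ` (chart_dom \<inter> qf A -` {0})"
      by blast
  qed
qed

lemma smooth_submanifold_codim1_chart_dom:
  "smooth_submanifold_codim1 (chart_dom \<inter> qf A -` {0}) chart_dom"
  unfolding smooth_submanifold_codim1_def
proof (intro conjI ballI open_chart_dom)
  fix p assume "p \<in> chart_dom \<inter> qf A -` {0}"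
  show "\<exists>V W (\<phi> :: real^'n \<Rightarrow> real^'n) j. p \<in> V \<and> V \<subseteq> chart_dom \<and>
      diffeo_between \<phi> V W \<and> \<phi> ` (chart_dom \<inter> qf A -` {0} \<inter> V) = {y \<in> W. y $ j = 0}"
    by (rule exI[of _ chart_dom], rule exI[of _ chart_range], rule exI[of _ chart], rule exI[of _ i])
      (use \<open>p \<in> _\<close> diffeo_between_chart chart_image_zero_set in \<open>auto simp: Int_absorb2\<close>)
qed auto

end

lemma qf_zero_set_smooth_submanifold_near:
  assumes "open U" "p \<in> U" "qf A p = 0" "qf_deriv A p (axis i 1) \<noteq> 0"
  shows "\<exists>V. open V \<and> V \<subseteq> U \<and> p \<in> V \<and> smooth_submanifold_codim1 (V \<inter> qf A -` {0}) V"
proof -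
  have pos_case: "\<exists>V. open V \<and> V \<subseteq> U \<and> p \<in> V \<and> smooth_submanifold_codim1 (V \<inter> qf A -` {0}) V"
    if pos: "0 < qf_deriv B p (axis i 1)" and zeros: "qf B -` {0} = qf A -` {0}" for B
  proof -
    interpret qf_slice_chart B i "p $ i" U
      by unfold_locales (fact assms(1))
    have "base p = p"
      by (simp add: vec_eq_iff base_def)
    then have "p \<in> chart_dom"
      using assms(2) pos by (simp add: chart_dom_def slope_def)
    then show ?thesis
      using open_chart_dom smooth_submanifold_codim1_chart_dom zeros
      by (intro exI[of _ chart_dom]) (auto simp: chart_dom_def)
  qed
  show ?thesis
  proof (cases "0 < qf_deriv A p (axis i 1)")
    case True
    then show ?thesis
      using pos_case by blast
  next
    case False
    then have "0 < qf_deriv (- A) p (axis i 1)"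
      using assms(4) by (simp add: qf_deriv_uminus)
    moreover have "qf (- A) -` {0} = qf A -` {0}"
      by (auto simp: qf_uminus)
    ultimately show ?thesis
      using pos_case by blast
  qed
qed

theorem lemma1:
  fixes Q :: "real^'n \<Rightarrow> real"
  assumes "quadratic_form Q"
    and "a \<in> nonneg_orthant" and "b \<in> nonneg_orthant"
    and "Q a > 0" and "Q b < 0"
  shows "\<exists>U. open U \<and> U \<subseteq> pos_orthant \<and> U \<inter> Q -` {0} \<noteq> {} \<and>
           smooth_submanifold_codim1 (U \<inter> Q -` {0}) U"
proof -
  obtain A where Q: "Q = qf A"
    using assms(1) by (auto simp: quadratic_form_def qf_def fun_eq_iff)
  obtain p i where p: "p \<in> pos_orthant" "qf A p = 0" "qf_deriv A p (axis i 1) \<noteq> 0"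
    using exists_regular_qf_zero_in_pos_orthant assms(2-5) unfolding Q by blast
  obtain U where "open U" "U \<subseteq> pos_orthant" "p \<in> U"
    "smooth_submanifold_codim1 (U \<inter> qf A -` {0}) U"
    using qf_zero_set_smooth_submanifold_near[OF open_pos_orthant p] by blast
  then show ?thesis
    using p(2) unfolding Q by blast
qed

end
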